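(* Let $G=(V,E)$ be a graph with vertex set $V=\{1,\ldots,n\}$. Let $G'$ be the digraph obtained by orienting each edge $\{i,j\}$ as the arc $(\min\{i,j\},\max\{i,j\})$. For each vertex $i$ let $n_i$ be its number of outgoing arcs in $G'$, let $\hat n_i=0$ if $n_i=0$ and $\hat n_i=\lceil\log n_i\rceil$ otherwise, and let $q=\sum_{i=1}^n\hat n_i$. Let $x_1,\ldots,x_q$ be distinct indeterminates, partitioned into consecutive blocks, the $i$-th block consisting of $\hat n_i$ indeterminates $x_{s_i+1},\ldots,x_{s_i+\hat n_i}$ where $s_i=\sum_{h<i}\hat n_h$. Label the outgoing arcs of vertex $i$ as follows: if $n_i=1$, its unique outgoing arc is labeled $1$; if $n_i\ge 2$, its $n_i$ outgoing arcs are labeled by pairwise distinct monomials of the form $\prod_{h=1}^{\hat n_i}x_{s_i+h}^{a_h}$ with each $a_h\in\{0,1\}$. Let $f_{i,j}$ denote the label of arc $(i,j)$, and let $Q(x_1,\ldots,x_q)$ be the polynomial obtained from $\mathrm{Pf}(G)$ by replacing each indeterminate $y_{i,j}$ by $f_{i,j}$. Then $G$ has a perfect matching if and only if $Q(x_1,\ldots,x_q)\not\equiv 0$.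
   Context: $\log$ is to base 2. A perfect matching of $G$ is a set $L$ of edges such that every vertex is incident to exactly one edge of $L$. For each edge $\{i,j\}$ with $i<j$ there is an indeterminate $y_{i,j}$. For a perfect matching $L=\{\{i_1,j_1\},\ldots,\{i_{n/2},j_{n/2}\}\}$ written with $i_r<j_r$ for all $r$ and $i_1<i_2<\cdots<i_{n/2}$, let $\pi(L)=y_{i_1,j_1}\cdots y_{i_{n/2},j_{n/2}}$ and let $\sigma(L)\in\{1,-1\}$ be the sign of the permutation $1\mapsto i_1,2\mapsto j_1,\ldots,n-1\mapsto i_{n/2},n\mapsto j_{n/2}$. Then $\mathrm{Pf}(G)=\sum_L\sigma(L)\pi(L)$, the sum over all perfect matchings $L$ of $G$. *)

theory Defs
  imports Complex_Main "HOL-Library.Poly_Mapping" "HOL-Combinatorics.Permutations"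
begin

definition simple_graph :: "nat \<Rightarrow> nat set set \<Rightarrow> bool" where
  "simple_graph n E \<longleftrightarrow> (\<forall>e\<in>E. \<exists>i j. e = {i, j} \<and> 1 \<le> i \<and> i < j \<and> j \<le> n)"

definition perfect_matching :: "nat \<Rightarrow> nat set set \<Rightarrow> nat set set \<Rightarrow> bool" where
  "perfect_matching n E L \<longleftrightarrow> L \<subseteq> E \<and> (\<forall>v\<in>{1..n}. \<exists>!e. e \<in> L \<and> v \<in> e)"

definition partner :: "nat set set \<Rightarrow> nat \<Rightarrow> nat" where
  "partner L i = (THE j. j \<noteq> i \<and> {i, j} \<in> L)"

(* The permutation 2r-1 -> i_r, 2r -> j_r (identity outside {1..n}),
  where i_1 < ... < i_{n/2} are the smaller endpoints of the edges of L. *)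
definition matching_perm :: "nat \<Rightarrow> nat set set \<Rightarrow> nat \<Rightarrow> nat" where
  "matching_perm n L k =
     (if k \<in> {1..n} then
        (let r = (k + 1) div 2;
             i = sorted_list_of_set (Min ` L) ! (r - 1)
         in if odd k then i else partner L i)
      else k)"

definition matching_sign :: "nat \<Rightarrow> nat set set \<Rightarrow> int" where
  "matching_sign n L = sign (matching_perm n L)"

definition out_nbrs :: "nat set set \<Rightarrow> nat \<Rightarrow> nat set" where
  "out_nbrs E i = {j. i < j \<and> {i, j} \<in> E}"

definition outdeg :: "nat set set \<Rightarrow> nat \<Rightarrow> nat" where
  "outdeg E i = card (out_nbrs E i)"

definition nhat :: "nat set set \<Rightarrow> nat \<Rightarrow> nat" where
  "nhat E i = (if outdeg E i = 0 then 0 else nat \<lceil>log 2 (real (outdeg E i))\<rceil>)"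

definition offset :: "nat set set \<Rightarrow> nat \<Rightarrow> nat" where
  "offset E i = (\<Sum>h\<in>{1..<i}. nhat E h)"

(* Monomials in x_1, x_2, ... are exponent vectors (nat =>0 nat); the monomial 1 is 0.
  A labelling f assigns to arc (i,j) the monomial f i j. *)
definition valid_labelling :: "nat \<Rightarrow> nat set set \<Rightarrow> (nat \<Rightarrow> nat \<Rightarrow> (nat \<Rightarrow>\<^sub>0 nat)) \<Rightarrow> bool" where
  "valid_labelling n E f \<longleftrightarrow>
     (\<forall>i\<in>{1..n}.
        (outdeg E i = 1 \<longrightarrow> (\<forall>j\<in>out_nbrs E i. f i j = 0)) \<and>
        (outdeg E i \<ge> 2 \<longrightarrow>
           inj_on (f i) (out_nbrs E i) \<and>
           (\<forall>j\<in>out_nbrs E i. \<forall>k.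
              Poly_Mapping.lookup (f i j) k \<le> 1 \<and>
              (Poly_Mapping.lookup (f i j) k \<noteq> 0 \<longrightarrow>
                 k \<in> {offset E i + 1 .. offset E i + nhat E i}))))"

(* The polynomial Q = Pf(G)[y_{i,j} := f_{i,j}], as a finitely supported map
  from monomials to integer coefficients. *)
definition Q_poly :: "nat \<Rightarrow> nat set set \<Rightarrow> (nat \<Rightarrow> nat \<Rightarrow> (nat \<Rightarrow>\<^sub>0 nat)) \<Rightarrow> ((nat \<Rightarrow>\<^sub>0 nat) \<Rightarrow>\<^sub>0 int)" where
  "Q_poly n E f =
     (\<Sum>L\<in>{L. perfect_matching n E L}.
        Poly_Mapping.single (\<Sum>e\<in>L. f (Min e) (Max e)) (matching_sign n L))"

end

theory Submission
  imports Defs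
begin

text \<open>A perfect matching L contributes the monomial m(L) = \<Sum>{e\<in>L} f(min e, max e) (exponent
  vectors add). Labels of arcs leaving i only involve the i-th block of variables, and the blocks
  are disjoint, so the i-th block of m(L) is the label of the arc of L leaving i, if there is one.
  If m(L) = m(L') for L \<noteq> L', the vertices covered by L - L' and by L' - L coincide; at the least
  such vertex i, both the L-edge and the L'-edge leave i, and their labels agree, contradicting the
  distinctness of the labels of arcs leaving i. So distinct perfect matchings give distinct
  monomials, nothing cancels in Q, and Q \<noteq> 0 iff a perfect matching exists.\<close>

lemma simple_graph_edgeE:
  assumes "simple_graph n E" "e \<in> E"
  obtains i j where "e = {i, j}" "1 \<le> i" "i < j" "j \<le> n"
  using assms unfolding simple_graph_def by blast

lemma simple_graph_vertex:
  assumes "simple_graph n E" "e \<in> E" "v \<in> e"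
  shows "v \<in> {1..n}"
  using assms by (elim simple_graph_edgeE) auto

lemma simple_graph_edge_least_vertex:
  assumes "simple_graph n E" "e \<in> E" "i \<in> e" "\<forall>v\<in>e. i \<le> v"
  obtains a where "e = {i, a}" "i < a"
  using assms by (elim simple_graph_edgeE) (auto simp: insert_commute)

lemma simple_graph_finite:
  assumes "simple_graph n E"
  shows "finite E"
proof (rule finite_subset)
  show "E \<subseteq> Pow {1..n}"
    using simple_graph_vertex[OF assms] by blast
qed simp

lemma finite_out_nbrs:
  assumes "simple_graph n E"
  shows "finite (out_nbrs E i)"
proof (rule finite_subset)
  show "out_nbrs E i \<subseteq> {1..n}"
    using simple_graph_vertex[OF assms] by (auto simp: out_nbrs_def)
qed simp

lemma perfect_matching_subset: "perfect_matching n E L \<Longrightarrow> L \<subseteq> E"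
  unfolding perfect_matching_def by blast

lemma perfect_matching_edge_exists:
  assumes "perfect_matching n E L" "v \<in> {1..n}"
  obtains e where "e \<in> L" "v \<in> e"
  using assms unfolding perfect_matching_def by metis

lemma perfect_matching_edge_unique:
  assumes "perfect_matching n E L" "v \<in> {1..n}" "e \<in> L" "v \<in> e" "e' \<in> L" "v \<in> e'"
  shows "e = e'"
  using assms unfolding perfect_matching_def by metis

lemma finite_perfect_matchings:
  assumes "finite E"
  shows "finite {L. perfect_matching n E L}"
proof (rule finite_subset)
  show "{L. perfect_matching n E L} \<subseteq> Pow E"
    using perfect_matching_subset by blast
qed (use assms in simp)

lemma perfect_matching_Union_diff_subset:
  assumes sg: "simple_graph n E"
    and pm: "perfect_matching n E L" and pm': "perfect_matching n E L'"
  shows "\<Union>(L - L') \<subseteq> \<Union>(L' - L)"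
proof
  fix v assume "v \<in> \<Union>(L - L')"
  then obtain e where e: "e \<in> L" "e \<notin> L'" "v \<in> e" by blast
  have v: "v \<in> {1..n}"
    using simple_graph_vertex[OF sg] perfect_matching_subset[OF pm] e by blast
  obtain e' where e': "e' \<in> L'" "v \<in> e'"
    using perfect_matching_edge_exists[OF pm' v] .
  have "e' \<notin> L"
    using perfect_matching_edge_unique[OF pm v] e e' by blast
  then show "v \<in> \<Union>(L' - L)" using e' by blast
qed

lemma perfect_matchings_diff_least_vertex:
  assumes sg: "simple_graph n E"
    and pm: "perfect_matching n E L" and pm': "perfect_matching n E L'" and "L \<noteq> L'"
  obtains i a b where "{i, a} \<in> L - L'" "i < a" "{i, b} \<in> L' - L" "i < b"
proof -
  have LE: "L \<subseteq> E" and LE': "L' \<subseteq> E"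
    using pm pm' by (simp_all add: perfect_matching_subset)
  define D where "D = \<Union>(L - L')"
  have D': "D = \<Union>(L' - L)"
    unfolding D_def
    using perfect_matching_Union_diff_subset[OF sg pm pm']
      perfect_matching_Union_diff_subset[OF sg pm' pm] by (rule subset_antisym)
  have "D \<noteq> {}"
  proof -
    obtain e where "e \<in> L - L' \<or> e \<in> L' - L" using \<open>L \<noteq> L'\<close> by blast
    moreover from this have "e \<noteq> {}"
      using simple_graph_edgeE[OF sg] LE LE' by blast
    ultimately have "\<Union>(L - L') \<noteq> {} \<or> \<Union>(L' - L) \<noteq> {}" by blast
    then show ?thesis using D_def D' by argo
  qed
  moreover have "finite D"
  proof (rule finite_subset)
    show "D \<subseteq> {1..n}"
      unfolding D_def using simple_graph_vertex[OF sg] LE by blast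
  qed simp
  ultimately have "Min D \<in> D" and least: "\<forall>v\<in>D. Min D \<le> v" by simp_all
  define i where "i = Min D"
  obtain e where e: "e \<in> L - L'" "i \<in> e"
    using \<open>Min D \<in> D\<close> unfolding i_def D_def by blast
  have "e \<in> E" "\<forall>v\<in>e. i \<le> v"
    using e LE least unfolding i_def D_def by auto
  then obtain a where a: "e = {i, a}" "i < a"
    using simple_graph_edge_least_vertex[OF sg _ e(2)] by blast
  obtain e' where e': "e' \<in> L' - L" "i \<in> e'"
    using \<open>Min D \<in> D\<close> unfolding i_def D' by blast
  have "e' \<in> E" "\<forall>v\<in>e'. i \<le> v"
    using e' LE' least unfolding i_def D' by auto
  then obtain b where b: "e' = {i, b}" "i < b"
    using simple_graph_edge_least_vertex[OF sg _ e'(2)] by blast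
  show thesis using that e(1) a e'(1) b by blast
qed

definition var_block :: "nat set set \<Rightarrow> nat \<Rightarrow> nat set" where
  "var_block E i = {offset E i + 1 .. offset E i + nhat E i}"

lemma offset_add_nhat_le_offset:
  assumes "1 \<le> i'" "i' < i"
  shows "offset E i' + nhat E i' \<le> offset E i"
proof -
  have "offset E i' + nhat E i' = (\<Sum>h\<in>{1..<Suc i'}. nhat E h)"
    unfolding offset_def using assms(1) by simp
  also have "\<dots> \<le> (\<Sum>h\<in>{1..<i}. nhat E h)"
    by (rule sum_mono2) (use assms in auto)
  finally show ?thesis unfolding offset_def .
qed

lemma var_blocks_disjoint:
  assumes "1 \<le> i" "1 \<le> i'" "i \<noteq> i'"
  shows "var_block E i \<inter> var_block E i' = {}"
proof (cases "i < i'")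
  case True
  then show ?thesis
    using offset_add_nhat_le_offset[OF assms(1) True, of E] by (auto simp: var_block_def)
next
  case False
  then have "i' < i" using assms(3) by simp
  then show ?thesis
    using offset_add_nhat_le_offset[OF assms(2), of i E] by (auto simp: var_block_def)
qed

lemma valid_labelling_lookup_in_var_block:
  assumes sg: "simple_graph n E" and vl: "valid_labelling n E f"
    and arc: "{i, j} \<in> E" "i < j" and nz: "Poly_Mapping.lookup (f i j) k \<noteq> 0"
  shows "k \<in> var_block E i"
proof -
  have i: "i \<in> {1..n}" using simple_graph_vertex[OF sg arc(1)] by simp
  have j: "j \<in> out_nbrs E i" using arc by (simp add: out_nbrs_def)
  then have "outdeg E i \<noteq> 0"
    using finite_out_nbrs[OF sg, of i] unfolding outdeg_def by (metis card_0_eq empty_iff)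
  moreover have "outdeg E i \<noteq> 1"
    using vl i j nz unfolding valid_labelling_def by fastforce
  ultimately have "outdeg E i \<ge> 2" by linarith
  then show ?thesis
    using vl i j nz unfolding valid_labelling_def var_block_def by blast
qed

lemma valid_labelling_inj:
  assumes sg: "simple_graph n E" and vl: "valid_labelling n E f"
    and arcs: "{i, a} \<in> E" "i < a" "{i, b} \<in> E" "i < b" and "a \<noteq> b"
  shows "f i a \<noteq> f i b"
proof -
  have i: "i \<in> {1..n}" using simple_graph_vertex[OF sg arcs(1)] by simp
  have ab: "{a, b} \<subseteq> out_nbrs E i" using arcs by (simp add: out_nbrs_def)
  then have "card {a, b} \<le> outdeg E i"
    unfolding outdeg_def by (rule card_mono[OF finite_out_nbrs[OF sg], rotated])
  then have "outdeg E i \<ge> 2" using \<open>a \<noteq> b\<close> by simp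
  then have "inj_on (f i) (out_nbrs E i)"
    using vl i unfolding valid_labelling_def by blast
  then show ?thesis using ab \<open>a \<noteq> b\<close> by (auto dest: inj_onD)
qed

definition matching_monomial :: "(nat \<Rightarrow> nat \<Rightarrow> (nat \<Rightarrow>\<^sub>0 nat)) \<Rightarrow> nat set set \<Rightarrow> (nat \<Rightarrow>\<^sub>0 nat)" where
  "matching_monomial f L = (\<Sum>e\<in>L. f (Min e) (Max e))"

lemma lookup_matching_monomial_var_block:
  assumes sg: "simple_graph n E" and vl: "valid_labelling n E f"
    and pm: "perfect_matching n E L" and ia: "{i, a} \<in> L" "i < a"
    and k: "k \<in> var_block E i"
  shows "Poly_Mapping.lookup (matching_monomial f L) k = Poly_Mapping.lookup (f i a) k"
proof -
  have LE: "L \<subseteq> E" using perfect_matching_subset[OF pm] .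
  have finL: "finite L" using simple_graph_finite[OF sg] LE finite_subset by blast
  have i: "i \<in> {1..n}" using simple_graph_vertex[OF sg] LE ia(1) by blast
  have others: "Poly_Mapping.lookup (f (Min e) (Max e)) k = 0" if e: "e \<in> L - {{i, a}}" for e
  proof (rule ccontr)
    assume nz: "Poly_Mapping.lookup (f (Min e) (Max e)) k \<noteq> 0"
    obtain i' j' where e_eq: "e = {i', j'}" "1 \<le> i'" "i' < j'"
      using simple_graph_edgeE[OF sg] LE e by blast
    have "i' \<noteq> i"
      using perfect_matching_edge_unique[OF pm i, of e "{i, a}"] e ia e_eq by auto
    moreover have "k \<in> var_block E i'"
      using valid_labelling_lookup_in_var_block[OF sg vl, of i' j'] LE e e_eq nz by auto
    ultimately show False
      using var_blocks_disjoint[of i i' E] i e_eq k by auto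
  qed
  have "Poly_Mapping.lookup (matching_monomial f L) k =
        (\<Sum>e\<in>L. Poly_Mapping.lookup (f (Min e) (Max e)) k)"
    by (simp add: matching_monomial_def lookup_sum)
  also have "\<dots> = Poly_Mapping.lookup (f (Min {i, a}) (Max {i, a})) k"
    using finL ia(1) others by (simp add: sum.remove)
  finally show ?thesis using ia(2) by simp
qed

lemma matching_monomial_eq_imp_label_eq:
  assumes sg: "simple_graph n E" and vl: "valid_labelling n E f"
    and pm: "perfect_matching n E L" and pm': "perfect_matching n E L'"
    and eq: "matching_monomial f L = matching_monomial f L'"
    and ia: "{i, a} \<in> L" "i < a" and ib: "{i, b} \<in> L'" "i < b"
  shows "f i a = f i b"
proof (rule poly_mapping_eqI)
  fix k
  show "Poly_Mapping.lookup (f i a) k = Poly_Mapping.lookup (f i b) k"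
  proof (cases "k \<in> var_block E i")
    case True
    then show ?thesis
      using lookup_matching_monomial_var_block[OF sg vl pm ia]
        lookup_matching_monomial_var_block[OF sg vl pm' ib] eq by metis
  next
    case False
    have "{i, a} \<in> E" "{i, b} \<in> E"
      using ia ib perfect_matching_subset[OF pm] perfect_matching_subset[OF pm'] by blast+
    then have "Poly_Mapping.lookup (f i a) k = 0" "Poly_Mapping.lookup (f i b) k = 0"
      using valid_labelling_lookup_in_var_block[OF sg vl] ia(2) ib(2) False by blast+
    then show ?thesis by simp
  qed
qed

lemma inj_on_matching_monomial:
  assumes sg: "simple_graph n E" and vl: "valid_labelling n E f"
  shows "inj_on (matching_monomial f) {L. perfect_matching n E L}"
proof (rule inj_onI, rule ccontr)
  fix L L'
  assume "L \<in> {L. perfect_matching n E L}" "L' \<in> {L. perfect_matching n E L}"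
  then have pm: "perfect_matching n E L" and pm': "perfect_matching n E L'" by simp_all
  assume eq: "matching_monomial f L = matching_monomial f L'" and "L \<noteq> L'"
  obtain i a b where ia: "{i, a} \<in> L - L'" "i < a" and ib: "{i, b} \<in> L' - L" "i < b"
    using perfect_matchings_diff_least_vertex[OF sg pm pm' \<open>L \<noteq> L'\<close>] .
  have "a \<noteq> b" using ia ib by auto
  then have "f i a \<noteq> f i b"
    using valid_labelling_inj[OF sg vl] ia ib
      perfect_matching_subset[OF pm] perfect_matching_subset[OF pm'] by blast
  moreover have "f i a = f i b"
    using matching_monomial_eq_imp_label_eq[OF sg vl pm pm' eq] ia ib by blast
  ultimately show False by contradiction
qed

lemma lookup_Q_poly_matching_monomial:
  assumes sg: "simple_graph n E" and vl: "valid_labelling n E f"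
    and pm: "perfect_matching n E L0"
  shows "Poly_Mapping.lookup (Q_poly n E f) (matching_monomial f L0) = matching_sign n L0"
proof -
  let ?S = "{L. perfect_matching n E L}"
  have "Poly_Mapping.lookup (Q_poly n E f) (matching_monomial f L0) =
        (\<Sum>L\<in>?S. if matching_monomial f L = matching_monomial f L0 then matching_sign n L else 0)"
    by (simp add: Q_poly_def matching_monomial_def lookup_sum lookup_single when_def)
  also have "\<dots> = (\<Sum>L\<in>?S. if L = L0 then matching_sign n L else 0)"
    using inj_on_matching_monomial[OF sg vl] pm by (intro sum.cong) (auto dest: inj_onD)
  also have "\<dots> = matching_sign n L0"
    using finite_perfect_matchings[OF simple_graph_finite[OF sg]] pm by simp
  finally show ?thesis .
qed

theorem lemma3p1:
  fixes n :: nat and E :: "nat set set" and f :: "nat \<Rightarrow> nat \<Rightarrow> (nat \<Rightarrow>\<^sub>0 nat)"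
  assumes "simple_graph n E"
    and "valid_labelling n E f"
  shows "(\<exists>L. perfect_matching n E L) \<longleftrightarrow> Q_poly n E f \<noteq> 0"
proof
  assume "\<exists>L. perfect_matching n E L"
  then obtain L where "perfect_matching n E L" ..
  then have "Poly_Mapping.lookup (Q_poly n E f) (matching_monomial f L) \<noteq> 0"
    using lookup_Q_poly_matching_monomial[OF assms] by (simp add: matching_sign_def)
  then show "Q_poly n E f \<noteq> 0" by auto
next
  assume "Q_poly n E f \<noteq> 0"
  then show "\<exists>L. perfect_matching n E L"
    unfolding Q_poly_def by (metis Collect_empty_eq sum.empty)
qed

end
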